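(* Let $a\in \mathcal{A}$. Then the following are equivalent: (1) $a$ has a generalized core-EP inverse. (2) There exist $z,y\in \mathcal{A}$ such that $a=z+y$, $z^*y=yz=0$, $z$ has a core inverse, and $y\in \mathcal{A}^{qnil}$. (3) There exist $z,y\in \mathcal{A}$ such that $a=z+y$, $yz=0$, $z$ has a core inverse, and $y\in \mathcal{A}^{qnil}$. In this case, the generalized core-EP inverse of $a$ equals the core inverse of $z$.
   Context: $\mathcal{A}$ is a complex Banach *-algebra with identity, $\mathcal{A}^{qnil}$ its quasinilpotents. The core inverse of $z$ is the unique $x$ with $zx^2=x$, $(zx)^*=zx$, $xz^2=z$. The generalized core-EP inverse of $a$ is the unique $x$ with $ax^2=x$, $(ax)^*=ax$, $\lim_{n\to\infty}\|a^n-xa^{n+1}\|^{1/n}=0$ (the case $w=1$ of the weighted notions). *)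

theory Defs
  imports Complex_Main
begin

class cbanach_star_algebra = banach + real_normed_algebra_1 +
  fixes scaleC :: "complex \<Rightarrow> 'a \<Rightarrow> 'a"
    and adj :: "'a \<Rightarrow> 'a"
  assumes scaleC_add_right: "scaleC c (x + y) = scaleC c x + scaleC c y"
    and scaleC_add_left: "scaleC (c + d) x = scaleC c x + scaleC d x"
    and scaleC_scaleC: "scaleC c (scaleC d x) = scaleC (c * d) x"
    and scaleC_one: "scaleC 1 x = x"
    and scaleR_scaleC: "scaleR r x = scaleC (complex_of_real r) x"
    and norm_scaleC: "norm (scaleC c x) = cmod c * norm x"
    and scaleC_mult_left: "scaleC c x * y = scaleC c (x * y)"
    and scaleC_mult_right: "x * scaleC c y = scaleC c (x * y)"
    and adj_adj: "adj (adj x) = x"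
    and adj_add: "adj (x + y) = adj x + adj y"
    and adj_mult: "adj (x * y) = adj y * adj x"
    and adj_scaleC: "adj (scaleC c x) = scaleC (cnj c) (adj x)"

definition invertible_el :: "'a::cbanach_star_algebra \<Rightarrow> bool" where
  "invertible_el x \<longleftrightarrow> (\<exists>b. b * x = 1 \<and> x * b = 1)"

definition spectrum :: "'a::cbanach_star_algebra \<Rightarrow> complex set" where
  "spectrum x = {l. \<not> invertible_el (scaleC l 1 - x)}"

definition qnil :: "'a::cbanach_star_algebra set" where
  "qnil = {y. spectrum y = {0}}"

definition is_core_inv :: "'a::cbanach_star_algebra \<Rightarrow> 'a \<Rightarrow> bool" where
  "is_core_inv z x \<longleftrightarrow> z * x^2 = x \<and> adj (z * x) = z * x \<and> x * z^2 = z"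

definition is_gcoreEP_inv :: "'a::cbanach_star_algebra \<Rightarrow> 'a \<Rightarrow> bool" where
  "is_gcoreEP_inv a x \<longleftrightarrow> a * x^2 = x \<and> adj (a * x) = a * x \<and>
     ((\<lambda>n. norm (a^n - x * a^(n+1)) powr (1 / real n)) \<longlonglongrightarrow> 0)"

end

theory Submission
  imports Defs "HOL-Analysis.Analysis"
begin

(* If a = z + y with y z = 0 and c is the core inverse of z, then a c = z c, a c^2 = c and
   a^n - c a^(n+1) = (1 - c z) y^n - c y^(n+1), which decays faster than any geometric sequence
   because y is quasinilpotent; so c is the generalized core-EP inverse of a. Conversely, if x is
   the generalized core-EP inverse of a, then (a^(m+1) - x a^(m+2)) x^(m+1) = a x - x a^2 x for
   every m, and the left-hand side tends to 0, so a x = x a^2 x. Hence z = a x a has core inverse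
   x, z^* y = y z = 0 for y = a - a x a, and y^(n+1) = (1 - a x)(a^(n+1) - x a^(n+2)) decays fast,
   so y is quasinilpotent.

   Both directions rest on the fact that y is quasinilpotent iff norm (y^n)^(1/n) tends to 0.
   The hard half replaces Cauchy's integral formula by its discrete version: the mean of
   (1 - w^k z y)^(-1) over the N-th roots of unity w^k is exactly (1 - z^N y^N)^(-1). By the
   resolvent identity this mean changes by O(|1 - w|) along a radius, so for large N it is close
   to 1 at radius r, which forces norm (r^N y^N) <= 1. *)

definition of_complex :: "complex \<Rightarrow> 'a::cbanach_star_algebra" where
  "of_complex c = scaleC c 1"

lemma scaleC_conv_of_complex: "scaleC c x = of_complex c * x"
  unfolding of_complex_def by (simp add: scaleC_mult_left)

lemma of_complex_add: "of_complex (b + c) = of_complex b + of_complex c"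
  unfolding of_complex_def by (simp add: scaleC_add_left)

lemma of_complex_mult: "of_complex (b * c) = of_complex b * of_complex c"
  unfolding of_complex_def by (simp add: scaleC_mult_left scaleC_scaleC)

lemma of_complex_0 [simp]: "of_complex 0 = 0"
  using of_complex_add[of 0 0] by simp

lemma of_complex_1 [simp]: "of_complex 1 = 1"
  unfolding of_complex_def by (simp add: scaleC_one)

lemma of_complex_diff: "of_complex (b - c) = of_complex b - of_complex c"
proof -
  have "of_complex (b - c) + of_complex c = of_complex b"
    by (simp only: of_complex_add[symmetric] diff_add_cancel)
  then show ?thesis unfolding eq_diff_eq .
qed

lemma of_complex_power: "of_complex (c ^ n) = of_complex c ^ n"
  by (induction n) (simp_all add: of_complex_mult)

lemma of_complex_of_nat: "of_complex (of_nat n) = of_nat n"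
  by (induction n) (simp_all add: of_complex_add)

lemma of_complex_sum: "of_complex (sum g A) = (\<Sum>i\<in>A. of_complex (g i))"
  by (induction A rule: infinite_finite_induct) (simp_all add: of_complex_add)

lemma of_complex_commute: "of_complex c * x = x * of_complex c"
  unfolding of_complex_def by (simp add: scaleC_mult_left scaleC_mult_right)

lemma of_complex_left_commute: "x * (of_complex c * z) = of_complex c * (x * z)"
  by (simp only: mult.assoc[symmetric] of_complex_commute[of c x, symmetric])

lemma of_complex_inverse: "c \<noteq> 0 \<Longrightarrow> of_complex c * of_complex (1 / c) = 1"
  by (simp flip: of_complex_mult)

lemma norm_of_complex_mult: "norm (of_complex c * x) = cmod c * norm x"
  by (simp flip: scaleC_conv_of_complex add: norm_scaleC)

lemma power_of_complex_mult: "(of_complex c * x) ^ n = of_complex (c ^ n) * x ^ n"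
proof (induction n)
  case (Suc n)
  have "(of_complex c * x) ^ Suc n = of_complex c * (x * (of_complex (c ^ n) * x ^ n))"
    by (simp only: power_Suc Suc mult.assoc)
  also have "\<dots> = of_complex (c ^ Suc n) * x ^ Suc n"
    by (simp only: of_complex_left_commute[of x "c ^ n" "x ^ n"] power_Suc of_complex_mult mult.assoc)
  finally show ?case .
qed simp

lemma invertible_el_of_complex_mult:
  assumes "c \<noteq> 0" "invertible_el u"
  shows "invertible_el (of_complex c * u)"
proof -
  obtain b where b: "b * u = 1" "u * b = 1"
    using assms(2) unfolding invertible_el_def by blast
  have "(b * of_complex (1 / c)) * (of_complex c * u) = b * (of_complex c * of_complex (1 / c)) * u"
    by (simp only: mult.assoc of_complex_commute[of "1 / c"])
  moreover have "(of_complex c * u) * (b * of_complex (1 / c)) = of_complex c * (u * b) * of_complex (1 / c)"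
    by (simp only: mult.assoc)
  ultimately show ?thesis
    unfolding invertible_el_def using assms(1) b by (auto simp: of_complex_inverse)
qed

lemma norm_mult3_le: "norm (x * y * z) \<le> norm x * norm y * norm (z::'a::real_normed_algebra)"
  by (rule order_trans[OF norm_mult_ineq mult_right_mono[OF norm_mult_ineq norm_ge_zero]])

lemma one_diff_power_eq_ring: "1 - x ^ n = (1 - x) * (\<Sum>i<n. x ^ i :: 'a::ring_1)"
  by (induction n) (simp_all add: algebra_simps)

section \<open>Sequences decaying faster than any geometric sequence\<close>

definition root_null :: "(nat \<Rightarrow> 'a::real_normed_vector) \<Rightarrow> bool" where
  "root_null u \<longleftrightarrow> (\<forall>e>0. \<forall>\<^sub>F n in sequentially. norm (u n) \<le> e ^ n)"

lemma powr_inverse_le_iff: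
  assumes "n > 0" "x \<ge> 0" "e \<ge> 0"
  shows "x powr (1 / real n) \<le> e \<longleftrightarrow> x \<le> e ^ n"
proof -
  have root_x: "x powr (1 / real n) = root n x" using assms by (simp add: root_powr_inverse)
  have root_e: "root n (e ^ n) = e" using assms(1,3) by (rule real_root_power_cancel)
  have "root n x \<le> root n (e ^ n) \<longleftrightarrow> x \<le> e ^ n" using assms(1) by (rule real_root_le_iff)
  then show ?thesis by (simp only: root_x root_e)
qed

lemma root_null_iff_root_tendsto_0:
  "root_null u \<longleftrightarrow> (\<lambda>n. norm (u n) powr (1 / real n)) \<longlonglongrightarrow> 0"
proof -
  have "root_null u \<longleftrightarrow> (\<forall>e>0. \<forall>\<^sub>F n in sequentially. norm (u n) powr (1 / real n) < e)"
  proof (intro iffI allI impI)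
    fix e :: real assume "root_null u" "e > 0"
    then have "\<forall>\<^sub>F n in sequentially. norm (u n) \<le> (e / 2) ^ n"
      unfolding root_null_def by simp
    then show "\<forall>\<^sub>F n in sequentially. norm (u n) powr (1 / real n) < e"
      using eventually_gt_at_top[of 0]
    proof eventually_elim
      case (elim n)
      then have "norm (u n) powr (1 / real n) \<le> e / 2"
        using \<open>e > 0\<close> powr_inverse_le_iff[of n "norm (u n)" "e / 2"] by simp
      then show ?case using \<open>e > 0\<close> by simp
    qed
  next
    assume lim: "\<forall>e>0. \<forall>\<^sub>F n in sequentially. norm (u n) powr (1 / real n) < e"
    show "root_null u" unfolding root_null_def
    proof (intro allI impI)
      fix e :: real assume "e > 0"
      with lim have "\<forall>\<^sub>F n in sequentially. norm (u n) powr (1 / real n) < e" by simp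
      then show "\<forall>\<^sub>F n in sequentially. norm (u n) \<le> e ^ n"
        using eventually_gt_at_top[of 0]
      proof eventually_elim
        case (elim n)
        then show ?case using \<open>e > 0\<close> powr_inverse_le_iff[of n "norm (u n)" e] by simp
      qed
    qed
  qed
  moreover have "\<forall>\<^sub>F n in sequentially. a < norm (u n) powr (1 / real n)" if "a < 0" for a
  proof (intro always_eventually allI)
    fix n
    show "a < norm (u n) powr (1 / real n)"
      using that powr_ge_zero[of "norm (u n)" "1 / real n"] by linarith
  qed
  ultimately show ?thesis unfolding order_tendsto_iff by blast
qed

lemma root_null_le:
  assumes "root_null v" "\<forall>\<^sub>F n in sequentially. norm (u n) \<le> C * norm (v n)"
  shows "root_null u"
  unfolding root_null_def
proof (intro allI impI)
  fix e :: real assume "e > 0"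
  define C' where "C' = max C 0 + 1"
  have C': "C' \<ge> 1" "C \<le> C'" unfolding C'_def by auto
  have "\<forall>\<^sub>F n in sequentially. norm (v n) \<le> (e / C') ^ n"
    using assms(1) \<open>e > 0\<close> C' unfolding root_null_def by simp
  with assms(2) eventually_ge_at_top[of 1]
  have "\<forall>\<^sub>F n in sequentially.
      norm (u n) \<le> C * norm (v n) \<and> norm (v n) \<le> (e / C') ^ n \<and> n \<ge> 1"
    by (intro eventually_conj)
  then show "\<forall>\<^sub>F n in sequentially. norm (u n) \<le> e ^ n"
  proof eventually_elim
    case (elim n)
    have "norm (u n) \<le> C' * norm (v n)"
      using elim C' by (meson mult_right_mono norm_ge_zero order_trans)
    also have "\<dots> \<le> C' * (e / C') ^ n"
      using elim C' by (intro mult_left_mono) auto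
    also have "\<dots> = e ^ n * (C' / C' ^ n)" by (simp add: power_divide)
    also have "\<dots> \<le> e ^ n"
    proof -
      have "C' \<le> C' ^ n" using C' elim by (intro self_le_power) auto
      then have "C' / C' ^ n \<le> 1" using C' by simp
      then show ?thesis using \<open>e > 0\<close> by (intro mult_left_le) auto
    qed
    finally show ?case .
  qed
qed

lemma root_null_mult_power:
  fixes u :: "nat \<Rightarrow> 'a::real_normed_algebra_1"
  assumes "root_null u"
  shows "root_null (\<lambda>n. u n * x ^ n)"
  unfolding root_null_def
proof (intro allI impI)
  fix e :: real assume "e > 0"
  define b where "b = norm x + 1"
  have b: "b > 0" "norm x \<le> b" unfolding b_def by (simp_all add: add_nonneg_pos)
  have "\<forall>\<^sub>F n in sequentially. norm (u n) \<le> (e / b) ^ n"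
    using assms \<open>e > 0\<close> b unfolding root_null_def by simp
  then show "\<forall>\<^sub>F n in sequentially. norm (u n * x ^ n) \<le> e ^ n"
  proof eventually_elim
    case (elim n)
    have "norm (u n * x ^ n) \<le> (e / b) ^ n * b ^ n"
      using elim b \<open>e > 0\<close> by (intro order_trans[OF norm_mult_ineq] mult_mono
          order_trans[OF norm_power_ineq] power_mono) auto
    also have "\<dots> = e ^ n" using b by (simp add: power_divide)
    finally show ?case .
  qed
qed

lemma root_null_eventually_const:
  assumes "root_null u" "\<forall>\<^sub>F n in sequentially. u n = c"
  shows "c = 0"
proof -
  have "\<forall>\<^sub>F n in sequentially. norm c \<le> (1 / 2) ^ n"
    using assms unfolding root_null_def
    by (auto elim: eventually_mono[OF eventually_conj] dest: spec[of _ "1/2"])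
  then have "norm c \<le> 0"
    by (intro tendsto_le[OF trivial_limit_sequentially LIMSEQ_power_zero tendsto_const]) auto
  then show ?thesis by simp
qed

lemma summable_norm_if_root_null:
  assumes "root_null u"
  shows "summable (\<lambda>n. norm (u n))"
proof (rule summable_comparison_test_ev)
  show "\<forall>\<^sub>F n in sequentially. norm (norm (u n)) \<le> (1 / 2) ^ n"
    using assms unfolding root_null_def by simp
qed (simp add: summable_geometric)

section \<open>Quasinilpotent elements\<close>

lemma neumann_series_inverse:
  fixes u :: "'a::{banach, real_normed_algebra_1}"
  assumes "summable (\<lambda>n. norm (u ^ n))"
  shows "(\<Sum>n. u ^ n) * (1 - u) = 1" "(1 - u) * (\<Sum>n. u ^ n) = 1"
proof -
  have sm: "summable (\<lambda>n. u ^ n)" using assms by (rule summable_norm_cancel)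
  have "(\<lambda>n. norm (u ^ n)) \<longlonglongrightarrow> 0" using assms by (rule summable_LIMSEQ_zero)
  then have "(\<lambda>n. u ^ n - u ^ Suc n) sums (u ^ 0 - 0)"
    by (intro telescope_sums') (simp add: tendsto_norm_zero_iff)
  then have tel: "(\<Sum>n. u ^ n - u ^ Suc n) = 1" by (simp add: sums_iff)
  have "(\<Sum>n. u ^ n) * (1 - u) = (\<Sum>n. u ^ n * (1 - u))" by (rule suminf_mult2[OF sm])
  also have "\<dots> = 1" using tel by (simp add: algebra_simps power_commutes)
  finally show "(\<Sum>n. u ^ n) * (1 - u) = 1" .
  have "(1 - u) * (\<Sum>n. u ^ n) = (\<Sum>n. (1 - u) * u ^ n)" by (rule suminf_mult[OF sm, symmetric])
  also have "\<dots> = 1" using tel by (simp add: algebra_simps)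
  finally show "(1 - u) * (\<Sum>n. u ^ n) = 1" .
qed

lemma no_right_inverse_if_root_null_powers:
  fixes y :: "'a::real_normed_algebra_1"
  assumes "root_null (\<lambda>n. y ^ n)"
  shows "y * b \<noteq> 1"
proof
  assume "y * b = 1"
  have "y ^ n * b ^ n = 1" for n
  proof (induction n)
    case (Suc n)
    have "y ^ Suc n * b ^ Suc n = y ^ n * (y * b) * b ^ n"
      by (simp only: power_Suc2[of y] power_Suc[of b] mult.assoc)
    then show ?case using Suc \<open>y * b = 1\<close> by simp
  qed simp
  moreover have "root_null (\<lambda>n. y ^ n * b ^ n)"
    using assms by (rule root_null_mult_power)
  ultimately show False
    using root_null_eventually_const[of "\<lambda>n. y ^ n * b ^ n" 1] by simp
qed

lemma spectrum_eq_0_if_root_null_powers: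
  assumes "root_null (\<lambda>n. y ^ n)"
  shows "spectrum y = {0}"
proof -
  have "\<not> invertible_el (scaleC 0 1 - y)"
  proof
    assume "invertible_el (scaleC 0 1 - y)"
    then obtain b where "- y * b = 1"
      unfolding invertible_el_def scaleC_conv_of_complex by auto
    then have "y * - b = 1" by simp
    with no_right_inverse_if_root_null_powers[OF assms] show False by blast
  qed
  moreover have "invertible_el (scaleC l 1 - y)" if "l \<noteq> 0" for l
  proof -
    define u where "u = of_complex (1 / l) * y"
    have "root_null (\<lambda>n. y ^ n * of_complex (1 / l) ^ n)"
      using assms by (rule root_null_mult_power)
    then have "root_null (\<lambda>n. u ^ n)"
      unfolding u_def power_of_complex_mult by (simp add: of_complex_commute flip: of_complex_power)
    then have "invertible_el (1 - u)"
      unfolding invertible_el_def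
      using neumann_series_inverse[OF summable_norm_if_root_null] by blast
    moreover have "scaleC l 1 - y = of_complex l * (1 - u)"
      using that by (simp add: u_def right_diff_distrib mult.assoc[symmetric] of_complex_inverse
          flip: of_complex_def)
    ultimately show ?thesis using that by (simp add: invertible_el_of_complex_mult)
  qed
  ultimately show ?thesis unfolding spectrum_def by auto
qed

lemma norm_le_1_if_inverse_near_1:
  fixes A t :: "'a::real_normed_algebra_1"
  assumes "A * (1 - t) = 1" "norm (A - 1) \<le> 1/2"
  shows "norm t \<le> 1"
proof -
  have "t = (A - 1) - (A - 1) * t" using assms(1) by (simp add: algebra_simps)
  then have "norm t = norm ((A - 1) - (A - 1) * t)" by (rule arg_cong)
  also have "\<dots> \<le> norm (A - 1) + norm ((A - 1) * t)" by (rule norm_triangle_ineq4)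
  also have "\<dots> \<le> norm (A - 1) + norm (A - 1) * norm t" by (intro add_left_mono norm_mult_ineq)
  also have "\<dots> \<le> 1/2 + 1/2 * norm t" using assms(2) by (intro add_mono mult_right_mono) auto
  finally show ?thesis by simp
qed

lemma norm_diff_le_if_second_order_bound:
  fixes g :: "real \<Rightarrow> 'b::real_normed_vector"
  assumes "a \<le> b"
    and local: "\<And>s t. a \<le> s \<Longrightarrow> s \<le> t \<Longrightarrow> t \<le> b \<Longrightarrow>
      norm (g s - g t) \<le> (t - s) * (C * (t - s) + E)"
  shows "norm (g a - g b) \<le> (b - a) * E"
proof -
  have chain: "norm (g a - g b) \<le> (b - a) * (C * ((b - a) / real J) + E)" if "J > 0" for J
  proof -
    define d where "d = (b - a) / real J"
    define p where "p j = a + real j * d" for j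
    have d: "d \<ge> 0" "real J * d = b - a" unfolding d_def using assms(1) that by auto
    have p_le_b: "p j \<le> b" if "j \<le> J" for j
    proof -
      have "real j * d \<le> real J * d" using that d(1) by (intro mult_right_mono) auto
      then show ?thesis using d(2) unfolding p_def by simp
    qed
    have "g a - g b = (\<Sum>j<J. g (p j) - g (p (Suc j)))"
      using sum_lessThan_telescope'[of "\<lambda>j. g (p j)" J] d by (simp add: p_def)
    then have "norm (g a - g b) \<le> (\<Sum>j<J. norm (g (p j) - g (p (Suc j))))"
      by (simp add: norm_sum)
    also have "\<dots> \<le> (\<Sum>j<J. d * (C * d + E))"
    proof (intro sum_mono)
      fix j assume "j \<in> {..<J}"
      then have "a \<le> p j" "p j \<le> p (Suc j)" "p (Suc j) \<le> b" "p (Suc j) - p j = d"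
        using d p_le_b[of "Suc j"] unfolding p_def by (auto simp: algebra_simps)
      then show "norm (g (p j) - g (p (Suc j))) \<le> d * (C * d + E)"
        using local[of "p j" "p (Suc j)"] by simp
    qed
    also have "\<dots> = (b - a) * (C * d + E)" using d by simp
    finally show ?thesis unfolding d_def .
  qed
  have "(\<lambda>J. (b - a) * (C * ((b - a) / real J) + E)) \<longlonglongrightarrow> (b - a) * (C * 0 + E)"
    by (intro tendsto_intros tendsto_divide_0[OF tendsto_const] filterlim_real_sequentially)
  then have lim: "(\<lambda>J. (b - a) * (C * ((b - a) / real J) + E)) \<longlonglongrightarrow> (b - a) * E"
    by simp
  have "\<forall>\<^sub>F J in sequentially. norm (g a - g b) \<le> (b - a) * (C * ((b - a) / real J) + E)"
    using eventually_gt_at_top[of 0] by eventually_elim (rule chain)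
  then show ?thesis
    using tendsto_le[OF trivial_limit_sequentially lim tendsto_const] by simp
qed

definition unit_root :: "nat \<Rightarrow> complex" where
  "unit_root N = exp (2 * of_real pi * \<i> / of_nat N)"

lemma unit_root_power_eq_1_iff:
  assumes "N \<ge> 1"
  shows "unit_root N ^ j = 1 \<longleftrightarrow> N dvd j"
proof -
  have "unit_root N ^ j = exp (2 * of_real pi * \<i> * of_nat j / of_nat N)"
    unfolding unit_root_def by (simp flip: exp_of_nat_mult add: field_simps)
  then show ?thesis using complex_root_unity_eq_1[OF assms] by simp
qed

lemma norm_unit_root [simp]: "cmod (unit_root N) = 1"
  unfolding unit_root_def by simp

lemma unit_root_tendsto_1: "unit_root \<longlonglongrightarrow> 1"
proof -
  have "(\<lambda>N. exp (2 * of_real pi * \<i> * (1 / of_nat N))) \<longlonglongrightarrow> exp (2 * of_real pi * \<i> * 0)"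
    by (intro tendsto_intros lim_1_over_n)
  then show ?thesis unfolding unit_root_def by simp
qed

lemma sum_unit_root_powers:
  assumes "N \<ge> 1"
  shows "(\<Sum>k<N. unit_root N ^ (j * k)) = (if N dvd j then of_nat N else 0)"
proof (cases "N dvd j")
  case True
  then have "unit_root N ^ (j * k) = 1" for k
    using assms by (simp add: unit_root_power_eq_1_iff)
  then show ?thesis using True by simp
next
  case False
  let ?w = "unit_root N ^ j"
  have "?w \<noteq> 1" using False assms by (simp add: unit_root_power_eq_1_iff)
  moreover have "?w ^ N = 1" using assms by (simp add: unit_root_power_eq_1_iff flip: power_mult)
  ultimately have "(\<Sum>k<N. ?w ^ k) = 0" using one_diff_power_eq[of ?w N] by simp
  then show ?thesis using False by (simp add: power_mult)
qed

locale quasinilpotent =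
  fixes y :: "'a::cbanach_star_algebra"
  assumes qnil: "y \<in> qnil"
begin

lemma invertible_one_minus: "invertible_el (1 - of_complex z * y)"
proof (cases "z = 0")
  case True
  then show ?thesis unfolding invertible_el_def by (intro exI[of _ 1]) simp
next
  case False
  then have "1 / z \<notin> spectrum y" using qnil unfolding qnil_def by simp
  then have "invertible_el (of_complex (1 / z) - y)"
    unfolding spectrum_def of_complex_def by simp
  moreover have "1 - of_complex z * y = of_complex z * (of_complex (1 / z) - y)"
    using False by (simp add: right_diff_distrib mult.assoc[symmetric] of_complex_inverse)
  ultimately show ?thesis using False by (simp add: invertible_el_of_complex_mult)
qed

(* Not the usual resolvent (l - y)^(-1) but (1 - z y)^(-1), which exists for every z. *)
definition resolvent :: "complex \<Rightarrow> 'a" where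
  "resolvent z = (SOME b. b * (1 - of_complex z * y) = 1 \<and> (1 - of_complex z * y) * b = 1)"

lemma resolvent_left: "resolvent z * (1 - of_complex z * y) = 1"
  and resolvent_right: "(1 - of_complex z * y) * resolvent z = 1"
  using someI_ex[OF invertible_one_minus[of z, unfolded invertible_el_def]]
  unfolding resolvent_def by auto

lemma resolvent_identity:
  "resolvent a - resolvent b = of_complex (a - b) * (resolvent a * y * resolvent b)"
proof -
  have "resolvent a - resolvent b
      = resolvent a * (1 - of_complex b * y) * resolvent b
        - resolvent a * (1 - of_complex a * y) * resolvent b"
    by (simp add: resolvent_left mult.assoc resolvent_right)
  also have "\<dots> = resolvent a * (of_complex (a - b) * y) * resolvent b"
    by (simp add: algebra_simps of_complex_diff)
  also have "\<dots> = of_complex (a - b) * (resolvent a * y * resolvent b)"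
    by (simp add: of_complex_left_commute mult.assoc)
  finally show ?thesis .
qed

lemma norm_resolvent_diff_le:
  "norm (resolvent a - resolvent b)
    \<le> cmod (a - b) * (norm (resolvent a) * norm y * norm (resolvent b))"
  unfolding resolvent_identity norm_of_complex_mult
  by (intro mult_left_mono norm_mult3_le) simp

lemma norm_resolvent_diff_le_near:
  assumes "cmod (x - z) * norm y * norm (resolvent z) \<le> 1/2"
  shows "norm (resolvent x - resolvent z) \<le> 2 * norm y * norm (resolvent z) ^ 2 * cmod (x - z)"
proof -
  let ?q = "cmod (x - z) * norm y * norm (resolvent z)"
  have diff: "norm (resolvent x - resolvent z) \<le> ?q * norm (resolvent x)"
    using norm_resolvent_diff_le[of x z] by (simp add: mult_ac)
  also have "\<dots> \<le> 1/2 * norm (resolvent x)"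
    using assms by (intro mult_right_mono) auto
  finally have "norm (resolvent x) \<le> 2 * norm (resolvent z)"
    using norm_triangle_ineq2[of "resolvent x" "resolvent z"] by linarith
  then have "?q * norm (resolvent x) \<le> ?q * (2 * norm (resolvent z))"
    by (intro mult_left_mono) auto
  with diff show ?thesis by (simp add: power2_eq_square mult_ac)
qed

lemma isCont_resolvent: "isCont resolvent z"
proof -
  define C where "C = 2 * norm y * norm (resolvent z) ^ 2"
  have "((\<lambda>x. cmod (x - z) * norm y * norm (resolvent z))
      \<longlongrightarrow> cmod (z - z) * norm y * norm (resolvent z)) (at z)"
    by (intro tendsto_intros)
  then have "\<forall>\<^sub>F x in at z. cmod (x - z) * norm y * norm (resolvent z) < 1/2"
    by (rule order_tendstoD) simp
  then have "\<forall>\<^sub>F x in at z. norm (resolvent x - resolvent z) \<le> C * cmod (x - z)"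
    unfolding C_def by eventually_elim (simp add: norm_resolvent_diff_le_near)
  moreover have "((\<lambda>x. C * cmod (x - z)) \<longlongrightarrow> C * cmod (z - z)) (at z)"
    by (intro tendsto_intros)
  ultimately have "((\<lambda>x. resolvent x - resolvent z) \<longlongrightarrow> 0) (at z)"
    by (auto intro: Lim_null_comparison)
  then show ?thesis unfolding isCont_def by (simp add: LIM_zero_iff)
qed

lemma resolvent_bounded_on_disc: "\<exists>M. \<forall>z. cmod z \<le> r \<longrightarrow> norm (resolvent z) \<le> M"
proof -
  have "continuous_on (cball 0 r) resolvent"
    by (intro continuous_at_imp_continuous_on ballI isCont_resolvent)
  then have "bounded (resolvent ` cball 0 r)"
    by (intro compact_imp_bounded compact_continuous_image) auto
  then obtain M where "\<forall>x\<in>cball 0 r. norm (resolvent x) \<le> M"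
    unfolding bounded_iff by auto
  then show ?thesis by (intro exI[of _ M]) simp
qed

lemma resolvent_mult_one_minus_power:
  "resolvent z * (1 - of_complex (z ^ N) * y ^ N) = (\<Sum>j<N. of_complex (z ^ j) * y ^ j)"
proof -
  have "resolvent z * (1 - of_complex (z ^ N) * y ^ N)
      = resolvent z * (1 - of_complex z * y) * (\<Sum>j<N. (of_complex z * y) ^ j)"
    using one_diff_power_eq_ring[of "of_complex z * y" N]
    by (simp add: power_of_complex_mult mult.assoc)
  then show ?thesis by (simp add: resolvent_left power_of_complex_mult)
qed

definition root_mean :: "nat \<Rightarrow> complex \<Rightarrow> 'a" where
  "root_mean N z = of_complex (1 / of_nat N) * (\<Sum>k<N. resolvent (unit_root N ^ k * z))"

(* Discrete Cauchy formula: averaging over the N-th roots of unity keeps exactly those terms of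
   the geometric series of z y whose exponent is divisible by N. *)
lemma root_mean_inverse:
  assumes "N \<ge> 1"
  shows "root_mean N z * (1 - of_complex (z ^ N) * y ^ N) = 1"
proof -
  let ?w = "unit_root N"
  have wN: "(?w ^ k * z) ^ N = z ^ N" for k
    using unit_root_power_eq_1_iff[OF assms, of "k * N"]
    by (simp add: power_mult_distrib flip: power_mult)
  have "(\<Sum>k<N. resolvent (?w ^ k * z)) * (1 - of_complex (z ^ N) * y ^ N)
      = (\<Sum>k<N. \<Sum>j<N. of_complex ((?w ^ k * z) ^ j) * y ^ j)"
    unfolding sum_distrib_right
  proof (intro sum.cong refl)
    fix k
    show "resolvent (?w ^ k * z) * (1 - of_complex (z ^ N) * y ^ N)
        = (\<Sum>j<N. of_complex ((?w ^ k * z) ^ j) * y ^ j)"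
      using resolvent_mult_one_minus_power[of "?w ^ k * z" N] unfolding wN .
  qed
  also have "\<dots> = (\<Sum>j<N. of_complex (\<Sum>k<N. (?w ^ k * z) ^ j) * y ^ j)"
    by (subst sum.swap) (simp add: of_complex_sum sum_distrib_right)
  also have "\<dots> = (\<Sum>j<N. of_complex (z ^ j * (\<Sum>k<N. ?w ^ (j * k))) * y ^ j)"
    by (simp add: sum_distrib_left power_mult_distrib mult.commute flip: power_mult)
  also have "\<dots> = (\<Sum>j<N. if j = 0 then of_nat N else 0)"
    using assms by (intro sum.cong refl)
      (auto simp: sum_unit_root_powers of_complex_of_nat dest: dvd_imp_le)
  also have "\<dots> = of_nat N" using assms by simp
  finally show ?thesis
    using assms unfolding root_mean_def
    by (simp add: mult.assoc flip: of_complex_of_nat of_complex_mult)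
qed

lemma norm_root_mean_le:
  assumes "N \<ge> 1" "cmod z \<le> r" "\<forall>x. cmod x \<le> r \<longrightarrow> norm (resolvent x) \<le> M"
  shows "norm (root_mean N z) \<le> M"
proof -
  have "norm (\<Sum>k<N. resolvent (unit_root N ^ k * z)) \<le> (\<Sum>k<N. M)"
    using assms by (intro order_trans[OF norm_sum] sum_mono) (simp add: norm_mult norm_power)
  then show ?thesis
    using assms(1) unfolding root_mean_def norm_of_complex_mult
    by (simp add: norm_divide field_simps)
qed

lemma root_mean_near_1:
  assumes "N \<ge> 1" "cmod z * norm y \<le> 1/2" "norm (root_mean N z) \<le> M"
  shows "norm (root_mean N z - 1) \<le> M * (1/2) ^ N"
proof -
  define t where "t = of_complex (z ^ N) * y ^ N"
  have "norm t \<le> cmod z ^ N * norm y ^ N"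
    unfolding t_def norm_of_complex_mult norm_power by (intro mult_left_mono norm_power_ineq) simp
  also have "\<dots> = (cmod z * norm y) ^ N" by (simp add: power_mult_distrib)
  also have "\<dots> \<le> (1/2) ^ N" using assms(2) by (intro power_mono) auto
  finally have t: "norm t \<le> (1/2) ^ N" .
  have "root_mean N z - 1 = root_mean N z * t"
    using root_mean_inverse[OF assms(1), of z] unfolding t_def by (simp add: algebra_simps)
  then have "norm (root_mean N z - 1) \<le> norm (root_mean N z) * norm t"
    by (simp add: norm_mult_ineq)
  also have "\<dots> \<le> M * (1/2) ^ N"
    using assms(3) t order_trans[OF norm_ge_zero assms(3)] by (intro mult_mono) auto
  finally show ?thesis .
qed

(* The first-order part of the difference of two root means; multiplied by (1 - w) z the sum
   telescopes. *)
lemma sum_resolvent_first_order_eq_0: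
  assumes "N \<ge> 2"
  shows "(\<Sum>k<N. of_complex (unit_root N ^ k) *
      (resolvent (unit_root N ^ k * z) * y * resolvent (unit_root N ^ Suc k * z))) = 0"
    (is "?T = 0")
proof (cases "z = 0")
  case True
  have "?T = of_complex (\<Sum>k<N. unit_root N ^ k) * (resolvent 0 * y * resolvent 0)"
    using True by (simp add: of_complex_sum sum_distrib_right)
  also have "\<dots> = 0" using assms sum_unit_root_powers[of N 1] by simp
  finally show ?thesis .
next
  case False
  let ?w = "unit_root N"
  have "?w \<noteq> 1" using assms unit_root_power_eq_1_iff[of N 1] by auto
  with False have nz: "(1 - ?w) * z \<noteq> 0" by simp
  have "of_complex ((1 - ?w) * z) * ?T = (\<Sum>k<N. resolvent (?w ^ k * z) - resolvent (?w ^ Suc k * z))"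
    unfolding sum_distrib_left
  proof (intro sum.cong refl)
    fix k
    have "(1 - ?w) * z * ?w ^ k = ?w ^ k * z - ?w ^ Suc k * z" by (simp add: algebra_simps)
    then show "of_complex ((1 - ?w) * z) * (of_complex (?w ^ k) *
        (resolvent (?w ^ k * z) * y * resolvent (?w ^ Suc k * z)))
      = resolvent (?w ^ k * z) - resolvent (?w ^ Suc k * z)"
      unfolding resolvent_identity by (simp only: mult.assoc[symmetric] flip: of_complex_mult)
  qed
  also have "\<dots> = resolvent z - resolvent (?w ^ N * z)"
    by (subst sum_lessThan_telescope') simp
  also have "\<dots> = 0" using assms unit_root_power_eq_1_iff[of N N] by simp
  finally have "of_complex (1 / ((1 - ?w) * z)) * (of_complex ((1 - ?w) * z) * ?T) = 0" by simp
  then show ?thesis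
    using nz by (simp add: mult.assoc[symmetric] flip: of_complex_mult)
qed

lemma sum_resolvent_diff_eq:
  assumes "N \<ge> 2"
  shows "(\<Sum>k<N. resolvent (unit_root N ^ k * z) - resolvent (unit_root N ^ k * u))
    = of_complex (z - u) * (\<Sum>k<N. of_complex (unit_root N ^ k) * (resolvent (unit_root N ^ k * z) * y *
        (resolvent (unit_root N ^ k * u) - resolvent (unit_root N ^ Suc k * z))))"
proof -
  let ?w = "unit_root N"
  have "(\<Sum>k<N. resolvent (?w ^ k * z) - resolvent (?w ^ k * u))
      = (\<Sum>k<N. of_complex (z - u) *
          (of_complex (?w ^ k) * (resolvent (?w ^ k * z) * y * resolvent (?w ^ k * u))))"
  proof (intro sum.cong refl)
    fix k
    have "?w ^ k * z - ?w ^ k * u = (z - u) * ?w ^ k" by (simp add: algebra_simps)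
    then show "resolvent (?w ^ k * z) - resolvent (?w ^ k * u) = of_complex (z - u) *
        (of_complex (?w ^ k) * (resolvent (?w ^ k * z) * y * resolvent (?w ^ k * u)))"
      unfolding resolvent_identity by (simp only: of_complex_mult mult.assoc)
  qed
  then show ?thesis
    using sum_resolvent_first_order_eq_0[OF assms, of z]
    by (simp add: sum_distrib_left right_diff_distrib sum_subtractf)
qed

lemma root_mean_diff:
  assumes "N \<ge> 2" "cmod z \<le> r" "cmod u \<le> r"
    and M: "\<forall>x. cmod x \<le> r \<longrightarrow> norm (resolvent x) \<le> M"
  shows "norm (root_mean N z - root_mean N u)
    \<le> cmod (z - u) * (M ^ 3 * norm y ^ 2 * cmod (u - unit_root N * z))"
proof -
  let ?w = "unit_root N"
  have M_rot: "norm (resolvent (?w ^ k * x)) \<le> M" if "cmod x \<le> r" for k x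
    using M that by (simp add: norm_mult norm_power)
  have "0 \<le> M" using order_trans[OF norm_ge_zero M_rot[OF assms(2), of 0]] .
  define D where "D k = of_complex (?w ^ k) * (resolvent (?w ^ k * z) * y *
      (resolvent (?w ^ k * u) - resolvent (?w ^ Suc k * z)))" for k
  have sum_eq: "(\<Sum>k<N. resolvent (?w ^ k * z) - resolvent (?w ^ k * u))
      = of_complex (z - u) * (\<Sum>k<N. D k)"
    unfolding D_def using assms(1) by (rule sum_resolvent_diff_eq)
  have D_le: "norm (D k) \<le> M ^ 3 * norm y ^ 2 * cmod (u - ?w * z)" for k
  proof -
    have "?w ^ k * u - ?w ^ Suc k * z = ?w ^ k * (u - ?w * z)" by (simp add: algebra_simps)
    then have rot: "cmod (?w ^ k * u - ?w ^ Suc k * z) = cmod (u - ?w * z)"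
      by (simp add: norm_mult norm_power)
    have prod: "norm (resolvent (?w ^ k * u)) * norm y * norm (resolvent (?w ^ Suc k * z))
        \<le> M * norm y * M"
      using M_rot[OF assms(3), of k] M_rot[OF assms(2), of "Suc k"] \<open>0 \<le> M\<close>
      by (intro mult_mono mult_right_mono) auto
    have diff: "norm (resolvent (?w ^ k * u) - resolvent (?w ^ Suc k * z))
        \<le> cmod (u - ?w * z) * (M * norm y * M)"
      using order_trans[OF norm_resolvent_diff_le mult_left_mono[OF prod norm_ge_zero]]
      unfolding rot .
    have "norm (D k) \<le> norm (resolvent (?w ^ k * z)) * norm y *
        norm (resolvent (?w ^ k * u) - resolvent (?w ^ Suc k * z))"
      unfolding D_def norm_of_complex_mult by (simp add: norm_power norm_mult3_le)
    also have "\<dots> \<le> M * norm y * (cmod (u - ?w * z) * (M * norm y * M))"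
      using M_rot[OF assms(2), of k] diff \<open>0 \<le> M\<close> by (intro mult_mono mult_right_mono) auto
    finally show ?thesis by (simp add: power2_eq_square power3_eq_cube mult_ac)
  qed
  have "norm (root_mean N z - root_mean N u)
      = norm (\<Sum>k<N. resolvent (?w ^ k * z) - resolvent (?w ^ k * u)) / real N"
    unfolding root_mean_def
    by (simp add: sum_subtractf norm_of_complex_mult norm_divide flip: right_diff_distrib)
  also have "\<dots> \<le> cmod (z - u) * (real N * (M ^ 3 * norm y ^ 2 * cmod (u - ?w * z))) / real N"
  proof -
    have "(\<Sum>k<N. norm (D k)) \<le> real N * (M ^ 3 * norm y ^ 2 * cmod (u - ?w * z))"
      using sum_bounded_above[of "{..<N}" "\<lambda>k. norm (D k)"] D_le by simp
    then show ?thesis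
      unfolding sum_eq norm_of_complex_mult
      by (intro divide_right_mono mult_left_mono order_trans[OF norm_sum]) auto
  qed
  also have "\<dots> = cmod (z - u) * (M ^ 3 * norm y ^ 2 * cmod (u - ?w * z))"
    using assms(1) by simp
  finally show ?thesis .
qed

lemma root_mean_radial_diff:
  assumes "N \<ge> 2" "0 \<le> s" "s \<le> t" "t \<le> r"
    and M: "\<forall>x. cmod x \<le> r \<longrightarrow> norm (resolvent x) \<le> M"
  shows "norm (root_mean N (of_real s) - root_mean N (of_real t))
    \<le> (t - s) * (M ^ 3 * norm y ^ 2 * (t - s) + M ^ 3 * norm y ^ 2 * r * cmod (1 - unit_root N))"
proof -
  let ?K = "M ^ 3 * norm y ^ 2"
  have "norm (resolvent 0) \<le> M" using M assms(2-4) by simp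
  then have "0 \<le> M" by (rule order_trans[OF norm_ge_zero])
  have "cmod (of_real t - unit_root N * of_real s)
      \<le> cmod (of_real (t - s)) + cmod (of_real s * (1 - unit_root N))"
    by (rule order_trans[OF _ norm_triangle_ineq]) (simp add: algebra_simps)
  also have "\<dots> \<le> (t - s) + r * cmod (1 - unit_root N)"
    using assms(2-4) by (simp add: norm_mult mult_right_mono flip: of_real_diff)
  finally have "?K * cmod (of_real t - unit_root N * of_real s)
      \<le> ?K * ((t - s) + r * cmod (1 - unit_root N))"
    using \<open>0 \<le> M\<close> by (intro mult_left_mono) auto
  then have "cmod (of_real s - of_real t) * (?K * cmod (of_real t - unit_root N * of_real s))
      \<le> (t - s) * (?K * ((t - s) + r * cmod (1 - unit_root N)))"
    using assms(3) by (simp add: mult_left_mono norm_minus_commute flip: of_real_diff)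
  moreover have "norm (root_mean N (of_real s) - root_mean N (of_real t))
      \<le> cmod (of_real s - of_real t) * (?K * cmod (of_real t - unit_root N * of_real s))"
    using assms by (intro root_mean_diff) auto
  ultimately show ?thesis by (simp add: algebra_simps)
qed

lemma norm_root_mean_sub_1_le:
  assumes "N \<ge> 2" "0 \<le> \<rho>" "\<rho> \<le> r" "\<rho> * norm y \<le> 1/2"
    and M: "\<forall>x. cmod x \<le> r \<longrightarrow> norm (resolvent x) \<le> M"
  shows "norm (root_mean N (of_real r) - 1)
    \<le> M * (1/2) ^ N + r * (M ^ 3 * norm y ^ 2) * r * cmod (1 - unit_root N)"
proof -
  let ?K = "M ^ 3 * norm y ^ 2"
  let ?A = "\<lambda>t. root_mean N (of_real t)"
  have "norm (resolvent 0) \<le> M" using M assms(2,3) by simp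
  then have "0 \<le> M" by (rule order_trans[OF norm_ge_zero])
  then have "0 \<le> ?K" by simp
  have "norm (?A \<rho> - 1) \<le> M * (1/2) ^ N"
    using assms by (intro root_mean_near_1 norm_root_mean_le[where r = r]) auto
  moreover have "norm (?A \<rho> - ?A r) \<le> (r - \<rho>) * (?K * r * cmod (1 - unit_root N))"
    using assms(3) by (rule norm_diff_le_if_second_order_bound[where C = ?K])
      (use root_mean_radial_diff[OF assms(1) order_trans[OF assms(2)] _ _ M] in simp)
  moreover have "(r - \<rho>) * (?K * r * cmod (1 - unit_root N)) \<le> r * (?K * r * cmod (1 - unit_root N))"
    using assms(2,3) \<open>0 \<le> ?K\<close> by (intro mult_right_mono) auto
  ultimately show ?thesis
    using norm_triangle_ineq4[of "?A \<rho> - 1" "?A \<rho> - ?A r"] by (simp add: mult.assoc)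
qed

lemma root_null_powers: "root_null (\<lambda>n. y ^ n)"
  unfolding root_null_def
proof (intro allI impI)
  fix e :: real assume "e > 0"
  define r where "r = 1 / e"
  have "r > 0" using \<open>e > 0\<close> by (simp add: r_def)
  obtain M where M: "\<forall>x. cmod x \<le> r \<longrightarrow> norm (resolvent x) \<le> M"
    using resolvent_bounded_on_disc by blast
  define \<rho> where "\<rho> = min r (1 / (2 * (norm y + 1)))"
  have \<rho>: "0 \<le> \<rho>" "\<rho> \<le> r" "\<rho> * norm y \<le> 1/2"
  proof -
    show "0 \<le> \<rho>" "\<rho> \<le> r" using \<open>r > 0\<close> by (simp_all add: \<rho>_def)
    have "norm y + 1 \<noteq> 0" using norm_ge_zero[of y] by linarith
    have "\<rho> * norm y \<le> 1 / (2 * (norm y + 1)) * (norm y + 1)"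
      unfolding \<rho>_def by (intro mult_mono) auto
    also have "\<dots> = 1/2" using \<open>norm y + 1 \<noteq> 0\<close> by simp
    finally show "\<rho> * norm y \<le> 1/2" .
  qed
  let ?K = "M ^ 3 * norm y ^ 2"
  have "(\<lambda>N. M * (1/2) ^ N + r * ?K * r * cmod (1 - unit_root N))
      \<longlonglongrightarrow> M * 0 + r * ?K * r * cmod (1 - 1)"
    by (intro tendsto_intros LIMSEQ_power_zero unit_root_tendsto_1) simp
  then have "(\<lambda>N. M * (1/2) ^ N + r * ?K * r * cmod (1 - unit_root N)) \<longlonglongrightarrow> 0"
    by simp
  then have "\<forall>\<^sub>F N in sequentially. M * (1/2) ^ N + r * ?K * r * cmod (1 - unit_root N) < 1/2"
    by (rule order_tendstoD(2)) simp
  with eventually_ge_at_top[of 2]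
  show "\<forall>\<^sub>F N in sequentially. norm (y ^ N) \<le> e ^ N"
  proof eventually_elim
    case (elim N)
    then have "norm (root_mean N (of_real r) - 1) \<le> 1/2"
      using norm_root_mean_sub_1_le[OF elim(1) \<rho> M] by simp
    then have "norm (of_complex (of_real r ^ N) * y ^ N) \<le> 1"
      using root_mean_inverse elim(1) by (intro norm_le_1_if_inverse_near_1) auto
    then have "r ^ N * norm (y ^ N) \<le> 1"
      using \<open>r > 0\<close> by (simp add: norm_of_complex_mult norm_power)
    then show "norm (y ^ N) \<le> e ^ N"
      using \<open>e > 0\<close> by (simp add: r_def field_simps)
  qed
qed

end

lemma qnil_iff_root_null_powers: "y \<in> qnil \<longleftrightarrow> root_null (\<lambda>n. y ^ n)"
  using quasinilpotent.root_null_powers[of y] spectrum_eq_0_if_root_null_powers[of y]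
  unfolding quasinilpotent_def qnil_def by blast

section \<open>The generalized core-EP inverse\<close>

lemma power_residual_of_sum:
  fixes z y c :: "'a::ring_1"
  assumes yz: "y * z = 0" and cz: "c * z ^ 2 = z"
  shows "(z + y) ^ n - c * (z + y) ^ (n + 1) = (1 - c * z) * y ^ n - c * y ^ (n + 1)"
proof (induction n)
  case 0
  show ?case by (simp add: algebra_simps)
next
  case (Suc n)
  have yz_power: "y ^ Suc m * z = 0" for m
    by (simp only: power_Suc2 mult.assoc yz mult_zero_right)
  have first: "(1 - c * z) * (y ^ n * z) = 0"
  proof (cases n)
    case 0
    have "(1 - c * z) * z = z - c * z ^ 2" by (simp add: algebra_simps power2_eq_square mult.assoc)
    then show ?thesis using 0 cz by simp
  next
    case (Suc m)
    then show ?thesis by (simp only: yz_power mult_zero_right)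
  qed
  have "(z + y) ^ Suc n - c * (z + y) ^ Suc (Suc n) = ((z + y) ^ n - c * (z + y) ^ Suc n) * (z + y)"
    by (simp only: left_diff_distrib mult.assoc power_Suc2[symmetric])
  also have "\<dots> = ((1 - c * z) * y ^ n - c * y ^ Suc n) * (z + y)" using Suc by simp
  also have "\<dots> = (1 - c * z) * (y ^ n * z) - c * (y ^ Suc n * z) + (1 - c * z) * y ^ Suc n
      - c * y ^ Suc (Suc n)"
    by (simp add: algebra_simps power_commutes)
  finally show ?case using first yz_power by simp
qed

lemma is_gcoreEP_inv_if_core_inv_qnil:
  assumes a: "a = z + y" and yz: "y * z = 0" and "y \<in> qnil" and "is_core_inv z c"
  shows "is_gcoreEP_inv a c"
proof -
  have c1: "z * c ^ 2 = c" and c2: "adj (z * c) = z * c" and c3: "c * z ^ 2 = z"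
    using \<open>is_core_inv z c\<close> unfolding is_core_inv_def by auto
  have "y * c = y * z * c ^ 2" using c1 by (simp add: mult.assoc)
  then have yc: "y * c = 0" using yz by simp
  have ac: "a * c = z * c" using yc by (simp add: a distrib_right)
  have ac2: "a * c ^ 2 = c" using c1 ac by (simp add: power2_eq_square mult.assoc[symmetric])
  have "root_null (\<lambda>n. a ^ n - c * a ^ (n + 1))"
  proof (rule root_null_le)
    show "root_null (\<lambda>n. y ^ n)" using \<open>y \<in> qnil\<close> by (simp add: qnil_iff_root_null_powers)
    show "\<forall>\<^sub>F n in sequentially.
        norm (a ^ n - c * a ^ (n + 1)) \<le> (norm (1 - c * z) + norm c * norm y) * norm (y ^ n)"
    proof (intro always_eventually allI)
      fix n
      have "norm (a ^ n - c * a ^ (n + 1)) = norm ((1 - c * z) * y ^ n - c * (y * y ^ n))"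
        unfolding a power_residual_of_sum[OF yz c3] by simp
      also have "\<dots> \<le> norm (1 - c * z) * norm (y ^ n) + norm c * (norm y * norm (y ^ n))"
        by (intro order_trans[OF norm_triangle_ineq4] add_mono order_trans[OF norm_mult_ineq]
            mult_left_mono norm_mult_ineq) auto
      finally show "norm (a ^ n - c * a ^ (n + 1)) \<le> (norm (1 - c * z) + norm c * norm y) * norm (y ^ n)"
        by (simp add: algebra_simps)
    qed
  qed
  then show ?thesis
    unfolding is_gcoreEP_inv_def root_null_iff_root_tendsto_0[symmetric] using ac ac2 c2 by simp
qed

context
  fixes a x :: "'a::ring_1"
  assumes ax2: "a * x ^ 2 = x"
begin

lemma power_mult_power_eq: "a ^ Suc m * x ^ Suc m = a * x"
proof (induction m)
  case (Suc m)
  have "a * x ^ Suc (Suc m) = x ^ Suc m"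
    using ax2 by (simp only: power2_eq_square power_Suc mult.assoc[symmetric])
  moreover have "a ^ Suc (Suc m) * x ^ Suc (Suc m) = a ^ Suc m * (a * x ^ Suc (Suc m))"
    by (simp only: power_Suc2[of a "Suc m"] mult.assoc)
  ultimately show ?case using Suc by simp
qed simp

lemma residual_mult_power: "(a ^ Suc m - x * a ^ (Suc m + 1)) * x ^ Suc m = a * x - x * a ^ 2 * x"
proof -
  have "(a ^ Suc m - x * a ^ (Suc m + 1)) * x ^ Suc m
      = a ^ Suc m * x ^ Suc m - x * a * (a ^ Suc m * x ^ Suc m)"
    by (simp only: left_diff_distrib mult.assoc Suc_eq_plus1[symmetric] power_Suc)
  also have "\<dots> = a * x - x * a ^ 2 * x"
    by (simp only: power_mult_power_eq power2_eq_square mult.assoc)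
  finally show ?thesis .
qed

context
  assumes ax: "a * x = x * a ^ 2 * x"
begin

lemma outer_inverse_eq: "x * a * x = x"
proof -
  have "x * a * x = x * a * (a * x ^ 2)" by (simp only: ax2)
  also have "\<dots> = x * a ^ 2 * x * x" by (simp only: power2_eq_square mult.assoc)
  also have "\<dots> = a * x * x" by (simp only: ax)
  also have "\<dots> = x" using ax2 by (simp only: power2_eq_square mult.assoc)
  finally show ?thesis .
qed

lemma decomposition_orthogonal: "(a - a * x * a) * (a * x * a) = 0" "a * x * (a - a * x * a) = 0"
proof -
  have "a * x * (a * x * a) = a * (x * a * x) * a" by (simp only: mult.assoc)
  then have "a * x * (a * x * a) = a * x * a" by (simp only: outer_inverse_eq)
  then show "a * x * (a - a * x * a) = 0" by (simp only: right_diff_distrib diff_self)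
  have "a * x * a * (a * x * a) = a * (x * a ^ 2 * x) * a"
    by (simp only: power2_eq_square mult.assoc)
  also have "\<dots> = a * (a * x) * a" by (simp only: ax)
  also have "\<dots> = a * (a * x * a)" by (simp only: mult.assoc)
  finally have "a * x * a * (a * x * a) = a * (a * x * a)" .
  then show "(a - a * x * a) * (a * x * a) = 0" by (simp only: left_diff_distrib diff_self)
qed

lemma qnil_part_power_eq: "(a - a * x * a) ^ Suc n = (1 - a * x) * (a ^ Suc n - x * a ^ (Suc n + 1))"
proof -
  define p where "p = a * x"
  have pp: "p * p = p"
  proof -
    have "p * p = a * (x * a * x)" unfolding p_def by (simp only: mult.assoc)
    then show ?thesis unfolding p_def by (simp only: outer_inverse_eq)
  qed
  have pap: "p * (a * p) = a * p"
  proof -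
    have "p * (a * p) = a * (x * a ^ 2 * x)" unfolding p_def by (simp only: power2_eq_square mult.assoc)
    then show ?thesis unfolding p_def by (simp only: ax)
  qed
  have papn: "p * (a ^ n * p) = a ^ n * p" for n
  proof (induction n)
    case (Suc n)
    have "a ^ Suc n * p = a * (p * (a ^ n * p))" by (simp only: Suc power_Suc mult.assoc)
    also have "\<dots> = p * (a * (p * (a ^ n * p)))" using pap by (simp only: mult.assoc[symmetric])
    also have "\<dots> = p * (a ^ Suc n * p)" by (simp only: Suc power_Suc mult.assoc)
    finally show ?case by (rule sym)
  qed (simp add: pp)
  have qa: "((1 - p) * a) ^ Suc m = (1 - p) * a ^ Suc m" for m
  proof (induction m)
    case (Suc m)
    have zero: "(1 - p) * (a ^ Suc m * p) = 0"
      by (simp only: left_diff_distrib mult_1_left papn diff_self)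
    have "((1 - p) * a) ^ Suc (Suc m) = ((1 - p) * a) ^ Suc m * ((1 - p) * a)"
      by (rule power_Suc2)
    also have "\<dots> = (1 - p) * a ^ Suc m * ((1 - p) * a)" by (simp only: Suc)
    also have "\<dots> = (1 - p) * a ^ Suc m * a - (1 - p) * (a ^ Suc m * p) * a"
      by (simp only: left_diff_distrib right_diff_distrib mult_1_left mult.assoc)
    also have "\<dots> = (1 - p) * a ^ Suc (Suc m)"
      by (simp only: zero mult_zero_left diff_zero power_Suc2[of a "Suc m"] mult.assoc)
    finally show ?case .
  qed simp
  have "(1 - p) * x = 0"
    unfolding p_def using ax2
    by (simp only: left_diff_distrib mult_1_left power2_eq_square mult.assoc diff_self)
  moreover have "a - a * x * a = (1 - p) * a" unfolding p_def by (simp add: algebra_simps)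
  ultimately show ?thesis
    using qa[of n] unfolding p_def by (simp add: right_diff_distrib mult.assoc[symmetric])
qed

end

end

lemma gcoreEP_inv_mult_eq:
  assumes "is_gcoreEP_inv a x"
  shows "a * x = x * a ^ 2 * x"
proof -
  have ax2: "a * x ^ 2 = x" and res: "root_null (\<lambda>n. a ^ n - x * a ^ (n + 1))"
    using assms unfolding is_gcoreEP_inv_def root_null_iff_root_tendsto_0 by auto
  from res have "root_null (\<lambda>n. (a ^ n - x * a ^ (n + 1)) * x ^ n)"
    by (rule root_null_mult_power)
  moreover have "\<forall>\<^sub>F n in sequentially. (a ^ n - x * a ^ (n + 1)) * x ^ n = a * x - x * a ^ 2 * x"
    using eventually_gt_at_top[of 0]
  proof eventually_elim
    case (elim n)
    then obtain m where "n = Suc m" using gr0_conv_Suc by blast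
    show ?case unfolding \<open>n = Suc m\<close> by (rule residual_mult_power[OF ax2])
  qed
  ultimately have "a * x - x * a ^ 2 * x = 0" by (rule root_null_eventually_const)
  then show ?thesis by simp
qed

lemma is_core_inv_mult_mult:
  assumes ax2: "a * x ^ 2 = x" and ax: "a * x = x * a ^ 2 * x" and adj_ax: "adj (a * x) = a * x"
  shows "is_core_inv (a * x * a) x"
  unfolding is_core_inv_def
proof (intro conjI)
  note xax = outer_inverse_eq[OF ax2 ax]
  have axax: "a * x * a * x = a * x"
  proof -
    have "a * x * a * x = a * (x * a * x)" by (simp only: mult.assoc)
    then show ?thesis by (simp only: xax)
  qed
  have "a * x * a * x ^ 2 = a * x * a * x * x" by (simp only: power2_eq_square mult.assoc)
  also have "\<dots> = x" using ax2 by (simp only: axax power2_eq_square mult.assoc)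
  finally show "a * x * a * x ^ 2 = x" .
  show "adj (a * x * a * x) = a * x * a * x" using adj_ax by (simp only: axax)
  have "x * (a * x * a) ^ 2 = x * a * x * a ^ 2 * x * a" by (simp only: power2_eq_square mult.assoc)
  also have "\<dots> = x * a ^ 2 * x * a" by (simp only: xax)
  also have "\<dots> = a * x * a" by (simp only: ax)
  finally show "x * (a * x * a) ^ 2 = a * x * a" .
qed

lemma qnil_decomposition_if_gcoreEP_inv:
  assumes "is_gcoreEP_inv a x"
  shows "is_core_inv (a * x * a) x" "adj (a * x * a) * (a - a * x * a) = 0"
    "(a - a * x * a) * (a * x * a) = 0" "a - a * x * a \<in> qnil"
proof -
  have ax2: "a * x ^ 2 = x" and adj_ax: "adj (a * x) = a * x"
    and res: "root_null (\<lambda>n. a ^ n - x * a ^ (n + 1))"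
    using assms unfolding is_gcoreEP_inv_def root_null_iff_root_tendsto_0 by auto
  have ax: "a * x = x * a ^ 2 * x" using assms by (rule gcoreEP_inv_mult_eq)
  show "is_core_inv (a * x * a) x" using ax2 ax adj_ax by (rule is_core_inv_mult_mult)
  show "(a - a * x * a) * (a * x * a) = 0" by (rule decomposition_orthogonal(1)[OF ax2 ax])
  have "adj (a * x * a) = adj a * (a * x)" by (simp only: adj_mult[of "a * x" a] adj_ax)
  then show "adj (a * x * a) * (a - a * x * a) = 0"
    using decomposition_orthogonal(2)[OF ax2 ax] by (simp add: mult.assoc)
  have "root_null (\<lambda>n. (a - a * x * a) ^ n)"
  proof (rule root_null_le[OF res])
    show "\<forall>\<^sub>F n in sequentially.
        norm ((a - a * x * a) ^ n) \<le> norm (1 - a * x) * norm (a ^ n - x * a ^ (n + 1))"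
      using eventually_gt_at_top[of 0]
    proof eventually_elim
      case (elim n)
      then obtain m where "n = Suc m" using gr0_conv_Suc by blast
      then show ?case
        using qnil_part_power_eq[OF ax2 ax, of m] by (simp add: norm_mult_ineq)
    qed
  qed
  then show "a - a * x * a \<in> qnil" by (simp add: qnil_iff_root_null_powers)
qed

theorem corollary3p3:
  fixes a :: "'a::cbanach_star_algebra"
  shows "((\<exists>x. is_gcoreEP_inv a x) \<longleftrightarrow>
           (\<exists>z y. a = z + y \<and> adj z * y = 0 \<and> y * z = 0 \<and> (\<exists>c. is_core_inv z c) \<and> y \<in> qnil))
       \<and> ((\<exists>z y. a = z + y \<and> adj z * y = 0 \<and> y * z = 0 \<and> (\<exists>c. is_core_inv z c) \<and> y \<in> qnil) \<longleftrightarrow>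
           (\<exists>z y. a = z + y \<and> y * z = 0 \<and> (\<exists>c. is_core_inv z c) \<and> y \<in> qnil))
       \<and> (\<forall>z y c. a = z + y \<and> y * z = 0 \<and> y \<in> qnil \<and> is_core_inv z c \<longrightarrow> is_gcoreEP_inv a c)"
proof -
  have one_two: "\<exists>z y. a = z + y \<and> adj z * y = 0 \<and> y * z = 0 \<and> (\<exists>c. is_core_inv z c) \<and> y \<in> qnil"
    if "is_gcoreEP_inv a x" for x
    using qnil_decomposition_if_gcoreEP_inv[OF that]
    by (intro exI[of _ "a * x * a"] exI[of _ "a - a * x * a"]) auto
  have three_one: "is_gcoreEP_inv a c"
    if "a = z + y" "y * z = 0" "y \<in> qnil" "is_core_inv z c" for z y c
    using that by (rule is_gcoreEP_inv_if_core_inv_qnil)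
  show ?thesis using one_two three_one by blast
qed

end
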